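(* Let $\mathtt{r}:[\omega]^2\to\omega$ be a function (writing $\mathtt{r}(k,l)$ for $\mathtt{r}(\{k,l\})$ with $k<l$) such that for all $k<l<m$ in $\omega$: (i) $\mathtt{r}(k,m)\neq\mathtt{r}(l,m)$; (ii) $\mathtt{r}(k,l)\le\max\{\mathtt{r}(k,m),\mathtt{r}(l,m)\}$; (iii) $\mathtt{r}(k,m)\le\max\{\mathtt{r}(k,l),\mathtt{r}(l,m)\}$. Let $X$ be a topological space and $(x_n)_{n\in\omega}$ a sequence of pairwise distinct points of $X$ such that the subspace $\{x_n:n\in\omega\}$ is homeomorphic to $\mathbb{Q}$, and fix a metric $d$ on $\{x_n:n\in\omega\}$ compatible with its subspace topology. Call $A\subseteq\omega$ scattered if there is no $B\subseteq A$ with $\{x_n:n\in B\}$ homeomorphic to $\mathbb{Q}$; let $\mathcal{I}$ be the family of scattered subsets of $\omega$ and $\mathcal{I}^+=\mathcal{P}(\omega)\setminus\mathcal{I}$. For $i,j\in\omega$ let $A_{i,j}=\{n\in\omega: d(x_n,x_i)<\frac{1}{j+1}\}$. Then for every $A\in\mathcal{I}^+$ there exists a nonempty $B\subseteq A$ such that $B$ is $\mathtt{r}$-shift-increasing and for all $i\in B$ and $j\in\omega$ there is $n\in B\cap A_{i,j}$ with $n\neq i$.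
   Context: $[\omega]^2$ is the set of two-element subsets of $\omega$. A set $B\subseteq\omega$ is $\mathtt{r}$-shift-increasing if for all $k,l,m\in B$ with $k<l<m$, $\mathtt{r}(k,l)\le\mathtt{r}(l,m)$. $\mathbb{Q}$ carries its usual topology. *)

theory Defs
  imports "HOL-Analysis.Analysis"
begin

text \<open>A function r on two-element subsets of nat is represented by r k l for k < l.\<close>

definition shift_increasing :: "(nat \<Rightarrow> nat \<Rightarrow> nat) \<Rightarrow> nat set \<Rightarrow> bool" where
  "shift_increasing r B \<longleftrightarrow>
     (\<forall>k\<in>B. \<forall>l\<in>B. \<forall>m\<in>B. k < l \<and> l < m \<longrightarrow> r k l \<le> r l m)"

abbreviation rat_topology :: "real topology" where
  "rat_topology \<equiv> subtopology euclideanreal \<rat>"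

definition scattered_idx :: "'a topology \<Rightarrow> (nat \<Rightarrow> 'a) \<Rightarrow> nat set \<Rightarrow> bool" where
  "scattered_idx X x A \<longleftrightarrow>
     \<not> (\<exists>B \<subseteq> A. subtopology X (x ` B) homeomorphic_space rat_topology)"

end

theory Submission
  imports Defs "HOL-Library.Nat_Bijection"
begin

(* Work with the metric pulled back to indices; "crowded" means having no isolated points.
   A non-scattered set contains a crowded set D0, and B is built inside it point by point: the
   chosen finite set F comes with a crowded reservoir D of candidates, each lying above F and
   keeping F shift-increasing when added. A new point t near a prescribed point of F is added,
   and the reservoir is cut down by the bad extensions of t, the m > t with r(t,m) < r(max F,t).
   Two facts make this possible. Bad extensions decrease the potential
   r(k,m) - #{l. k < l < m, r(l,m) < r(k,l)}, so near every candidate there is one at positive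
   distance from its own bad extensions. And among #F + 1 candidates with pairwise disjoint sets
   of bad extensions, a splitting property of perfect kernels yields one whose removal keeps F
   inside the perfect kernel of the rest. Dovetailing over (point, radius) makes B crowded. *)

section \<open>Crowded sets and perfect kernels\<close>

context Metric_space
begin

definition crowded :: "'a set \<Rightarrow> bool" where
  "crowded C \<longleftrightarrow> C \<subseteq> M \<and> (\<forall>p\<in>C. \<forall>e>0. \<exists>q\<in>C. q \<noteq> p \<and> d p q < e)"

definition perfect_kernel :: "'a set \<Rightarrow> 'a set" where
  "perfect_kernel G = \<Union>{C. C \<subseteq> G \<and> crowded C}"

definition apart :: "'a \<Rightarrow> 'a set \<Rightarrow> bool" where
  "apart p E \<longleftrightarrow> (\<exists>\<rho>>0. \<forall>q\<in>E. \<rho> \<le> d p q)"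

lemma Metric_space_inj_pullback:
  assumes "inj f" "range f \<subseteq> M" shows "Metric_space UNIV (\<lambda>a b. d (f a) (f b))"
proof
  fix a b c
  have "f a \<in> M" "f b \<in> M" "f c \<in> M" using assms(2) by auto
  then show "0 \<le> d (f a) (f b)" "d (f a) (f b) = d (f b) (f a)"
    "d (f a) (f b) = 0 \<longleftrightarrow> a = b" "d (f a) (f c) \<le> d (f a) (f b) + d (f b) (f c)"
    using assms(1) by (auto simp: commute triangle inj_eq)
qed

lemma crowded_Diff_singleton:
  assumes C: "crowded C" shows "crowded (C - {s})"
proof (cases "s \<in> C")
  case True
  have "\<exists>q\<in>C - {s}. q \<noteq> p \<and> d p q < e" if p: "p \<in> C - {s}" and "e > 0" for p e
  proof -
    have "p \<in> M" "s \<in> M" using C p True by (auto simp: crowded_def)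
    then have "0 < min e (d p s)" using p \<open>e > 0\<close> by simp
    then obtain q where "q \<in> C" "q \<noteq> p" "d p q < min e (d p s)"
      using C p unfolding crowded_def by blast
    then show ?thesis by auto
  qed
  then show ?thesis using C unfolding crowded_def by blast
qed (simp add: C)

lemma crowded_Diff_finite:
  assumes "crowded C" "finite S" shows "crowded (C - S)"
  using assms(2)
proof induction
  case (insert s S)
  then show ?case using crowded_Diff_singleton by (metis Diff_insert)
qed (simp add: assms(1))

lemma crowded_Union: "(\<And>C. C \<in> \<C> \<Longrightarrow> crowded C) \<Longrightarrow> crowded (\<Union>\<C>)"
  unfolding crowded_def by (metis UnionE UnionI Union_least)

lemma crowded_Int_mball:
  assumes "crowded C" shows "crowded (C \<inter> mball p e)"
proof -
  have "\<exists>q'\<in>C \<inter> mball p e. q' \<noteq> q \<and> d q q' < \<epsilon>"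
    if q: "q \<in> C \<inter> mball p e" and "\<epsilon> > 0" for q \<epsilon>
  proof -
    have "0 < min \<epsilon> (e - d p q)" using q \<open>\<epsilon> > 0\<close> by simp
    then obtain q' where q': "q' \<in> C" "q' \<noteq> q" "d q q' < min \<epsilon> (e - d p q)"
      using assms q unfolding crowded_def by blast
    have "q' \<in> M" using assms q' by (auto simp: crowded_def)
    then have "d p q' \<le> d p q + d q q'" using q by (intro triangle) auto
    then show ?thesis using q q' \<open>q' \<in> M\<close> by auto
  qed
  moreover have "C \<inter> mball p e \<subseteq> M" by auto
  ultimately show ?thesis unfolding crowded_def by blast
qed

lemma crowded_insert_limit:
  assumes "crowded C" "p \<in> M" "\<not> apart p C"
  shows "crowded (insert p C)"
proof (cases "p \<in> C")
  case False
  have "\<exists>q\<in>C. q \<noteq> p \<and> d p q < e" if "e > 0" for e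
    using assms(3) that False unfolding apart_def by (metis not_le)
  then show ?thesis using assms(1,2) unfolding crowded_def by (metis insert_iff insert_subset)
qed (simp add: assms(1) insert_absorb)

lemma crowded_perfect_kernel: "crowded (perfect_kernel G)"
  unfolding perfect_kernel_def by (rule crowded_Union) blast

lemma perfect_kernel_subset: "perfect_kernel G \<subseteq> G"
  unfolding perfect_kernel_def by blast

lemma perfect_kernelI: "C \<subseteq> G \<Longrightarrow> crowded C \<Longrightarrow> p \<in> C \<Longrightarrow> p \<in> perfect_kernel G"
  unfolding perfect_kernel_def by blast

lemma perfect_kernel_mono: "G \<subseteq> H \<Longrightarrow> perfect_kernel G \<subseteq> perfect_kernel H"
  unfolding perfect_kernel_def by blast

lemma apart_perfect_kernel:
  assumes "p \<in> G" "p \<in> M" "p \<notin> perfect_kernel G"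
  shows "apart p (perfect_kernel G)"
  using crowded_insert_limit[OF crowded_perfect_kernel assms(2)] perfect_kernel_subset assms
  by (metis insertI1 insert_subset perfect_kernelI)

lemma perfect_kernel_if_apart:
  assumes "crowded D" "t \<in> D" "apart t (D \<inter> E)"
  shows "t \<in> perfect_kernel (D - E)"
proof -
  obtain \<rho> where "\<rho> > 0" "\<And>q. q \<in> D \<inter> E \<Longrightarrow> \<rho> \<le> d t q"
    using assms(3) unfolding apart_def by blast
  then have "D \<inter> mball t \<rho> \<subseteq> D - E" by (force simp: not_le[symmetric])
  moreover have "t \<in> D \<inter> mball t \<rho>" using assms(1,2) \<open>\<rho> > 0\<close> by (auto simp: crowded_def)
  ultimately show ?thesis by (metis perfect_kernelI crowded_Int_mball assms(1))
qed

lemma crowded_if_not_apart: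
  assumes "crowded C" "A \<subseteq> C" "\<And>q. q \<in> C \<Longrightarrow> \<not> apart q A"
  shows "crowded A"
proof -
  have "\<exists>a'\<in>A. a' \<noteq> a \<and> d a a' < \<epsilon>" if a: "a \<in> A" and "\<epsilon> > 0" for a \<epsilon>
  proof -
    obtain q where q: "q \<in> C" "q \<noteq> a" "d a q < \<epsilon>/2"
      using assms(1,2) a \<open>\<epsilon> > 0\<close> unfolding crowded_def by (meson half_gt_zero subsetD)
    have M: "a \<in> M" "q \<in> M" "A \<subseteq> M" using assms(1,2) a q(1) by (auto simp: crowded_def)
    then have "0 < min (\<epsilon>/2) (d a q)" using q(2) \<open>\<epsilon> > 0\<close> by simp
    then obtain a' where a': "a' \<in> A" "d q a' < min (\<epsilon>/2) (d a q)"
      using assms(3)[OF q(1)] unfolding apart_def by (meson not_le)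
    have "d a a' \<le> d a q + d q a'" using M a' by (intro triangle) auto
    moreover have "a' \<noteq> a" using a' M by (auto simp: commute)
    ultimately show ?thesis using a' q by (intro bexI[of _ a']) auto
  qed
  then show ?thesis using assms(1,2) by (auto simp: crowded_def)
qed

lemma perfect_kernel_Un_if_crowded:
  assumes C: "crowded C" "p \<in> C" "C \<subseteq> G1 \<union> G2" and p: "p \<in> G1" "p \<in> G2"
  shows "p \<in> perfect_kernel G1 \<union> perfect_kernel G2"
proof (rule ccontr)
  assume "p \<notin> perfect_kernel G1 \<union> perfect_kernel G2"
  moreover have "p \<in> M" using C by (auto simp: crowded_def)
  ultimately obtain e1 e2 where "e1 > 0" "e2 > 0"
    and e1: "\<And>q. q \<in> perfect_kernel G1 \<Longrightarrow> e1 \<le> d p q"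
    and e2: "\<And>q. q \<in> perfect_kernel G2 \<Longrightarrow> e2 \<le> d p q"
    using apart_perfect_kernel p unfolding apart_def by (metis UnCI)
  define C' where "C' = C \<inter> mball p (min e1 e2)"
  have C': "crowded C'" "p \<in> C'" "C' \<subseteq> C"
    unfolding C'_def using crowded_Int_mball C \<open>p \<in> M\<close> \<open>e1 > 0\<close> \<open>e2 > 0\<close> by auto
  show False
  proof (cases "\<exists>q\<in>C'. apart q (C' \<inter> G1)")
    case True
    then obtain q where q: "q \<in> C'" "apart q (C' \<inter> G1)" by blast
    then have "q \<in> perfect_kernel (C' - G1)" using perfect_kernel_if_apart C'(1) by blast
    moreover have "C' - G1 \<subseteq> G2" using C'(3) C(3) by blast
    ultimately have "e2 \<le> d p q" using e2 perfect_kernel_mono by blast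
    moreover have "d p q < min e1 e2" using q(1) unfolding C'_def by simp
    ultimately show False by simp
  next
    case False
    then have "crowded (C' \<inter> G1)" using crowded_if_not_apart[OF C'(1)] by blast
    then have "p \<in> perfect_kernel G1" using C'(2) p(1) by (intro perfect_kernelI[of "C' \<inter> G1"]) auto
    then show False using e1 \<open>e1 > 0\<close> \<open>p \<in> M\<close> by fastforce
  qed
qed

lemma exists_perfect_kernel_Diff:
  assumes D: "crowded D" and F: "finite F" "F \<subseteq> D" and T: "finite T" "card F < card T"
    and disj: "disjoint_family_on E T" and avoid: "\<And>t. t \<in> T \<Longrightarrow> F \<inter> E t = {}"
  shows "\<exists>t\<in>T. F \<subseteq> perfect_kernel (D - E t)"
proof -
  define fails where "fails q = {t\<in>T. q \<notin> perfect_kernel (D - E t)}" for q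
  \<comment> \<open>For \<open>t1 \<noteq> t2\<close> the sets \<open>D - E t1\<close> and \<open>D - E t2\<close> cover \<open>D\<close>.\<close>
  have "card (fails q) \<le> 1" if q: "q \<in> F" for q
  proof -
    have "t1 = t2" if t: "t1 \<in> fails q" "t2 \<in> fails q" for t1 t2
    proof (rule ccontr)
      assume "t1 \<noteq> t2"
      then have "D \<subseteq> (D - E t1) \<union> (D - E t2)" using disj t unfolding fails_def disjoint_family_on_def by blast
      moreover have "q \<in> D - E t1" "q \<in> D - E t2" using avoid t q F(2) unfolding fails_def by blast+
      ultimately show False using perfect_kernel_Un_if_crowded[OF D] q F(2) t unfolding fails_def by blast
    qed
    then show ?thesis using T(1) by (simp add: card_le_Suc0_iff_eq fails_def)
  qed
  then have "card (\<Union>q\<in>F. fails q) \<le> card F"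
    using card_UN_le[OF F(1), of fails] sum_bounded_above[of F "\<lambda>q. card (fails q)" 1] by simp
  then have "\<not> T \<subseteq> (\<Union>q\<in>F. fails q)"
    using T card_mono[of "\<Union>q\<in>F. fails q" T] F(1) unfolding fails_def by auto
  then show ?thesis unfolding fails_def by blast
qed

end

section \<open>Bad triples of the colouring\<close>

locale pair_coloring =
  fixes r :: "nat \<Rightarrow> nat \<Rightarrow> nat"
  assumes r_neq: "\<And>k l m. k < l \<Longrightarrow> l < m \<Longrightarrow> r k m \<noteq> r l m"
    and r_le_max_short: "\<And>k l m. k < l \<Longrightarrow> l < m \<Longrightarrow> r k l \<le> max (r k m) (r l m)"
    and r_le_max_long: "\<And>k l m. k < l \<Longrightarrow> l < m \<Longrightarrow> r k m \<le> max (r k l) (r l m)"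
begin

definition bad_ext :: "nat \<Rightarrow> nat \<Rightarrow> nat set" where
  "bad_ext k m = {m'. m < m' \<and> r m m' < r k m}"

definition bad_mid :: "nat \<Rightarrow> nat \<Rightarrow> nat set" where
  "bad_mid k m = {l. k < l \<and> l < m \<and> r l m < r k l}"

lemma r_less_if_le: "k < l \<Longrightarrow> l < m \<Longrightarrow> r k l \<le> r l m \<Longrightarrow> r k m < r l m"
  using r_le_max_long[of k l m] r_neq[of k l m] by (simp add: max_def split: if_splits)

lemma r_eq_if_less: "k < l \<Longrightarrow> l < m \<Longrightarrow> r l m < r k l \<Longrightarrow> r k m = r k l"
  using r_le_max_short[of k l m] r_le_max_long[of k l m] by (simp add: max_def split: if_splits)

lemma r_eq_if_bad_ext: "k < m \<Longrightarrow> m' \<in> bad_ext k m \<Longrightarrow> r k m' = r k m"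
  unfolding bad_ext_def using r_eq_if_less by auto

lemma finite_bad_mid: "finite (bad_mid k m)"
  unfolding bad_mid_def by (rule finite_subset[of _ "{..<m}"]) auto

lemma insert_bad_mid_subset:
  assumes "k < m" "m' \<in> bad_ext k m"
  shows "insert m (bad_mid k m) \<subseteq> bad_mid k m'"
proof
  fix l assume l: "l \<in> insert m (bad_mid k m)"
  have m': "m < m'" "r m m' < r k m" using assms(2) unfolding bad_ext_def by auto
  show "l \<in> bad_mid k m'"
  proof (cases "l = m")
    case False
    then have l': "k < l" "l < m" "r l m < r k l" using l unfolding bad_mid_def by auto
    have "r l m' \<le> max (r l m) (r m m')" using r_le_max_long[OF l'(2) m'(1)] .
    then have "r l m' < r k l" using l'(3) m'(2) r_eq_if_less[OF l'] by simp
    then show ?thesis using l' m' unfolding bad_mid_def by auto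
  qed (use assms m' in \<open>auto simp: bad_mid_def\<close>)
qed

lemma card_bad_mid_less:
  assumes "k < m" "m' \<in> bad_ext k m"
  shows "card (bad_mid k m) < card (bad_mid k m')"
proof -
  have "m \<notin> bad_mid k m" unfolding bad_mid_def by auto
  then have "card (insert m (bad_mid k m)) = Suc (card (bad_mid k m))"
    using finite_bad_mid by simp
  then show ?thesis
    using card_mono[OF finite_bad_mid insert_bad_mid_subset[OF assms]] by simp
qed

lemma card_bad_mid_le:
  assumes "k < m" shows "card (bad_mid k m) \<le> r k m"
proof -
  \<comment> \<open>The values \<open>r l m\<close>, \<open>l \<in> bad_mid k m\<close>, are distinct and below \<open>r k l = r k m\<close>.\<close>
  have "inj_on (\<lambda>l. r l m) (bad_mid k m)"
  proof (rule inj_onI, rule ccontr)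
    fix a b assume ab: "a \<in> bad_mid k m" "b \<in> bad_mid k m" "r a m = r b m" "a \<noteq> b"
    then consider "a < b" | "b < a" by linarith
    then show False using ab r_neq[of a b m] r_neq[of b a m] unfolding bad_mid_def by cases auto
  qed
  moreover have "(\<lambda>l. r l m) ` bad_mid k m \<subseteq> {..< r k m}"
    unfolding bad_mid_def using r_eq_if_less by auto
  ultimately show ?thesis using card_inj_on_le[of "\<lambda>l. r l m" "bad_mid k m" "{..< r k m}"] by simp
qed

lemma bad_ext_disjoint:
  assumes "k < m1" "k < m2" "m1 \<noteq> m2"
    and "r k m1 \<noteq> r k m2 \<or> card (bad_mid k m1) = card (bad_mid k m2)"
  shows "bad_ext k m1 \<inter> bad_ext k m2 = {}"
  using assms
proof (induction m1 m2 rule: linorder_wlog)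
  case (le m1 m2)
  show ?case
  proof (rule ccontr)
    assume "bad_ext k m1 \<inter> bad_ext k m2 \<noteq> {}"
    then obtain z where z: "z \<in> bad_ext k m1" "z \<in> bad_ext k m2" by blast
    have "m1 < m2" "k < m1" "k < m2" using le by auto
    have r_z: "r k z = r k m1" "r k z = r k m2"
      using r_eq_if_bad_ext[OF \<open>k < m1\<close> z(1)] r_eq_if_bad_ext[OF \<open>k < m2\<close> z(2)] by simp_all
    have "m2 < z" "r m1 z < r k m1" "r m2 z < r k m2" using z unfolding bad_ext_def by auto
    then have "r m1 m2 < r k m1" using r_le_max_short[OF \<open>m1 < m2\<close> \<open>m2 < z\<close>] r_z by simp
    then have "m2 \<in> bad_ext k m1" using \<open>m1 < m2\<close> unfolding bad_ext_def by simp
    then have "card (bad_mid k m1) < card (bad_mid k m2)" using card_bad_mid_less \<open>k < m1\<close> by blast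
    then show False using le r_z by auto
  qed
next
  case (sym m1 m2)
  then show ?case by (metis inf_commute)
qed

lemma exists_disjoint_bad_ext:
  assumes "infinite M" "M \<subseteq> {k<..}"
  shows "\<exists>T\<subseteq>M. finite T \<and> card T = n \<and> disjoint_family_on (bad_ext k) T"
proof -
  define key where "key m = (r k m, card (bad_mid k m))" for m
  have "\<exists>T\<subseteq>M. finite T \<and> card T = n \<and> (inj_on (r k) T \<or> (\<exists>c. \<forall>m\<in>T. key m = c))"
  proof (cases "finite (r k ` M)")
    case False
    then obtain W where "finite W" "card W = n" "W \<subseteq> r k ` M"
      using infinite_arbitrarily_large by blast
    then obtain T where T: "T \<subseteq> M" "inj_on (r k) T" "W = r k ` T"
      by (auto simp: subset_image_inj)
    then have "finite T" "card T = n"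
      using \<open>finite W\<close> \<open>card W = n\<close> finite_image_iff[OF T(2)] card_image[OF T(2)] by auto
    then show ?thesis using T by blast
  next
    case True
    have key_in: "key m \<in> r k ` M \<times> {..Max (r k ` M)}" if "m \<in> M" for m
    proof -
      have "card (bad_mid k m) \<le> r k m" using card_bad_mid_le assms(2) that by auto
      also have "\<dots> \<le> Max (r k ` M)" using True that by simp
      finally show ?thesis using that unfolding key_def by simp
    qed
    have "finite (r k ` M \<times> {..Max (r k ` M)})" using True by simp
    then have "finite (key ` M)" using key_in by (meson finite_subset image_subset_iff)
    then obtain m0 where "m0 \<in> M" "infinite {m\<in>M. key m = key m0}"
      using pigeonhole_infinite[OF assms(1)] by blast
    then obtain T where "finite T" "card T = n" "T \<subseteq> {m\<in>M. key m = key m0}"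
      using infinite_arbitrarily_large by blast
    then show ?thesis by blast
  qed
  then obtain T where T: "T \<subseteq> M" "finite T" "card T = n"
    and distinct: "inj_on (r k) T \<or> (\<exists>c. \<forall>m\<in>T. key m = c)" by blast
  have "disjoint_family_on (bad_ext k) T"
    unfolding disjoint_family_on_def
  proof (intro ballI impI)
    fix a b assume ab: "a \<in> T" "b \<in> T" "a \<noteq> b"
    then have "r k a \<noteq> r k b \<or> key a = key b"
      using distinct unfolding inj_on_def by metis
    then have "r k a \<noteq> r k b \<or> card (bad_mid k a) = card (bad_mid k b)"
      unfolding key_def by auto
    then show "bad_ext k a \<inter> bad_ext k b = {}"
      using bad_ext_disjoint[of k a b] ab T(1) assms(2) by auto
  qed
  then show ?thesis using T by blast
qed

lemma shift_increasing_insert_insert: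
  assumes F: "finite F" "F \<noteq> {}" and t: "shift_increasing r (insert t F)"
    and m: "shift_increasing r (insert m F)" and less: "Max F < t" "t < m"
    and le: "r (Max F) t \<le> r t m"
  shows "shift_increasing r (insert m (insert t F))"
  unfolding shift_increasing_def
proof (intro ballI impI)
  fix a b c assume abc: "a \<in> insert m (insert t F)" "b \<in> insert m (insert t F)"
    "c \<in> insert m (insert t F)" "a < b \<and> b < c"
  have le_Max: "\<And>q. q \<in> F \<Longrightarrow> q \<le> Max F" and "Max F \<in> F" using F by simp_all
  consider "c \<noteq> m" | "c = m" "b = t" | "c = m" "b \<noteq> t" by blast
  then show "r a b \<le> r b c"
  proof cases
    case 1
    then have "c \<in> insert t F" using abc(3) by simp
    then have "c \<le> t" using le_Max less(1) by force
    then have "a \<in> insert t F" "b \<in> insert t F" using abc less(2) by auto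
    then show ?thesis using t abc(4) \<open>c \<in> insert t F\<close> unfolding shift_increasing_def by blast
  next
    case 2
    then have "a \<in> F" using abc less by auto
    show ?thesis
    proof (cases "a = Max F")
      case False
      then have "a < Max F" using le_Max[OF \<open>a \<in> F\<close>] by simp
      then have "r a (Max F) \<le> r (Max F) t"
        using t \<open>Max F \<in> F\<close> \<open>a \<in> F\<close> less unfolding shift_increasing_def by blast
      then have "r a t < r (Max F) t" using r_less_if_le \<open>a < Max F\<close> less by blast
      then show ?thesis using le 2 by simp
    qed (use le 2 in simp)
  next
    case 3
    then have "b \<in> F" using abc less by auto
    then have "a < t" using abc(4) le_Max less(1) by (meson le_less_trans order.strict_trans)
    then have "a \<in> F" using abc(1,4) 3 by auto
    then show ?thesis using m \<open>b \<in> F\<close> abc 3 unfolding shift_increasing_def by blast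
  qed
qed

end

locale colored_metric = pair_coloring r + Metric_space "UNIV :: nat set" d
  for r :: "nat \<Rightarrow> nat \<Rightarrow> nat" and d :: "nat \<Rightarrow> nat \<Rightarrow> real"
begin

lemma exists_apart_bad_ext:
  assumes "m0 \<in> D" "k < m0" "d p m0 < e"
  shows "\<exists>m\<in>D. m0 \<le> m \<and> d p m < e \<and> apart m (D \<inter> bad_ext k m)"
  using assms
proof (induction "r k m0 - card (bad_mid k m0)" arbitrary: m0 rule: less_induct)
  case less
  show ?case
  proof (cases "apart m0 (D \<inter> bad_ext k m0)")
    case False
    then obtain m1 where m1: "m1 \<in> D \<inter> bad_ext k m0" "d m0 m1 < e - d p m0"
      using less.prems unfolding apart_def by (meson diff_gt_0_iff_gt not_le)
    have "m0 < m1" using m1 unfolding bad_ext_def by auto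
    have "d p m1 < e" using triangle[of p m0 m1] m1 by simp
    \<comment> \<open>Along a bad extension, \<open>r k m\<close> stays fixed while \<open>card (bad_mid k m) \<le> r k m\<close> grows.\<close>
    have "r k m1 = r k m0" using r_eq_if_bad_ext less.prems(2) m1 by blast
    moreover have "card (bad_mid k m0) < card (bad_mid k m1)"
      using card_bad_mid_less less.prems(2) m1 by blast
    moreover have "card (bad_mid k m1) \<le> r k m1"
      using card_bad_mid_le less.prems(2) \<open>m0 < m1\<close> by simp
    ultimately have "r k m1 - card (bad_mid k m1) < r k m0 - card (bad_mid k m0)" by linarith
    then obtain m where "m \<in> D" "m1 \<le> m" "d p m < e" "apart m (D \<inter> bad_ext k m)"
      using less.hyps[of m1] m1 \<open>d p m1 < e\<close> less.prems(2) \<open>m0 < m1\<close> by force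
    then show ?thesis using \<open>m0 < m1\<close> by (intro bexI[of _ m]) auto
  qed (use less.prems in blast)
qed

text \<open>\<open>F\<close> is the finite part of \<open>B\<close> chosen so far, \<open>D \<subseteq> A\<close> the reservoir of further candidates.\<close>
definition admissible :: "nat set \<Rightarrow> nat set \<Rightarrow> nat set \<Rightarrow> bool" where
  "admissible A F D \<longleftrightarrow> finite F \<and> F \<noteq> {} \<and> F \<subseteq> D \<and> D \<subseteq> A \<and> crowded D \<and> shift_increasing r F \<and>
     (\<forall>m\<in>D - F. Max F < m \<and> shift_increasing r (insert m F))"

lemma admissible_insert:
  assumes adm: "admissible A F D" and t: "t \<in> D - F"
    and ker: "insert t F \<subseteq> perfect_kernel (D - bad_ext (Max F) t)"
  shows "admissible A (insert t F) (perfect_kernel (D - bad_ext (Max F) t) - ({..<t} - F))"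
proof -
  define K where "K = perfect_kernel (D - bad_ext (Max F) t)"
  have F: "finite F" "F \<noteq> {}" "D \<subseteq> A"
    and extend: "\<And>m. m \<in> D - F \<Longrightarrow> Max F < m \<and> shift_increasing r (insert m F)"
    using adm unfolding admissible_def by blast+
  have "K \<subseteq> D - bad_ext (Max F) t" unfolding K_def by (rule perfect_kernel_subset)
  have "crowded (K - ({..<t} - F))"
    unfolding K_def by (rule crowded_Diff_finite[OF crowded_perfect_kernel]) simp
  moreover have "Max (insert t F) = t"
    using Max_insert[OF F(1,2), of t] extend[OF t] by linarith
  moreover have "Max (insert t F) < m \<and> shift_increasing r (insert m (insert t F))"
    if m: "m \<in> K - ({..<t} - F) - insert t F" for m
  proof -
    have "m \<in> D - F" "m \<notin> bad_ext (Max F) t" "t < m"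
      using m \<open>K \<subseteq> D - bad_ext (Max F) t\<close> by auto
    then have "r (Max F) t \<le> r t m" unfolding bad_ext_def by auto
    then show ?thesis
      using shift_increasing_insert_insert F(1,2) extend t \<open>m \<in> D - F\<close> \<open>t < m\<close>
        \<open>Max (insert t F) = t\<close> by simp
  qed
  ultimately show ?thesis
    using F extend[OF t] ker \<open>K \<subseteq> D - bad_ext (Max F) t\<close>
    unfolding admissible_def K_def[symmetric] by auto
qed

lemma admissible_step:
  assumes adm: "admissible A F D" and "p \<in> F" "e > 0"
  obtains m D' where "m \<in> D - F" "d p m < e" "admissible A (insert m F) D'"
proof -
  define k where "k = Max F"
  have F: "finite F" "F \<subseteq> D" "crowded D" and above: "\<And>m. m \<in> D - F \<Longrightarrow> k < m"
    using adm unfolding admissible_def k_def by blast+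
  have le_k: "\<And>q. q \<in> F \<Longrightarrow> q \<le> k" using F(1) unfolding k_def by simp
  define M where "M = {m \<in> D - F. d p m < e \<and> apart m (D \<inter> bad_ext k m)}"
  have "\<exists>m\<in>M. N < m" for N
  proof -
    have "crowded (D - (F \<union> {..N} - {p}))" using crowded_Diff_finite F(1,3) by simp
    moreover have "p \<in> D - (F \<union> {..N} - {p})" using \<open>p \<in> F\<close> F(2) by blast
    ultimately obtain q where q: "q \<in> D - (F \<union> {..N} - {p})" "q \<noteq> p" "d p q < e"
      using \<open>e > 0\<close> unfolding crowded_def by blast
    then have "q \<in> D - F" "N < q" by auto
    then obtain m where "m \<in> D" "q \<le> m" "d p m < e" "apart m (D \<inter> bad_ext k m)"
      using exists_apart_bad_ext above q(3) by blast
    moreover have "m \<notin> F" using le_k above[OF \<open>q \<in> D - F\<close>] \<open>q \<le> m\<close> by fastforce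
    ultimately show ?thesis using \<open>N < q\<close> unfolding M_def by (intro bexI[of _ m]) auto
  qed
  then have "infinite M" by (meson infinite_nat_iff_unbounded)
  moreover have "M \<subseteq> {k<..}" using above unfolding M_def by auto
  ultimately obtain T where T: "T \<subseteq> M" "finite T" "card T = Suc (card F)"
    and disj: "disjoint_family_on (bad_ext k) T"
    using exists_disjoint_bad_ext by meson
  have "F \<inter> bad_ext k t = {}" if "t \<in> T" for t
    using that T(1) \<open>M \<subseteq> {k<..}\<close> le_k unfolding bad_ext_def by fastforce
  then obtain t where "t \<in> T" and ker: "F \<subseteq> perfect_kernel (D - bad_ext k t)"
    using exists_perfect_kernel_Diff[OF F(3,1,2) T(2) _ disj] T(3) by auto
  then have t: "t \<in> D - F" "d p t < e" "apart t (D \<inter> bad_ext k t)"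
    using T(1) unfolding M_def by auto
  then have "t \<in> perfect_kernel (D - bad_ext k t)" using perfect_kernel_if_apart F(3) by blast
  then show thesis
    using that t admissible_insert[OF adm \<open>t \<in> D - F\<close>] ker unfolding k_def by blast
qed

definition next_state :: "nat set \<Rightarrow> nat \<Rightarrow> real \<Rightarrow> nat list \<times> nat set \<Rightarrow> nat list \<times> nat set" where
  "next_state A i e s = (SOME s'. \<exists>m. fst s' = fst s @ [m] \<and> m \<notin> set (fst s) \<and>
      d (fst s ! i) m < e \<and> admissible A (set (fst s')) (snd s'))"

lemma next_state_extends:
  assumes "admissible A (set (fst s)) (snd s)" "i < length (fst s)" "e > 0"
  shows "\<exists>m. fst (next_state A i e s) = fst s @ [m] \<and> m \<notin> set (fst s) \<and> d (fst s ! i) m < e \<and>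
      admissible A (set (fst (next_state A i e s))) (snd (next_state A i e s))"
proof -
  obtain m D' where "m \<in> snd s - set (fst s)" "d (fst s ! i) m < e"
      "admissible A (insert m (set (fst s))) D'"
    using admissible_step[OF assms(1) nth_mem[OF assms(2)] assms(3)] by blast
  then have "\<exists>s'. \<exists>m. fst s' = fst s @ [m] \<and> m \<notin> set (fst s) \<and> d (fst s ! i) m < e \<and>
      admissible A (set (fst s')) (snd s')"
    by (intro exI[of _ "(fst s @ [m], D')"]) auto
  then show ?thesis unfolding next_state_def by (rule someI_ex)
qed

text \<open>Step \<open>n\<close> serves the pair \<open>(i, j) = prod_decode n\<close>: it adds a point within \<open>1/(j+1)\<close>
  of the \<open>i\<close>-th point, so every point is approximated at every scale.\<close>
primrec states :: "nat set \<Rightarrow> nat list \<times> nat set \<Rightarrow> nat \<Rightarrow> nat list \<times> nat set" where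
  "states A s0 0 = s0"
| "states A s0 (Suc n) =
     next_state A (fst (prod_decode n)) (inverse (real (Suc (snd (prod_decode n))))) (states A s0 n)"

lemma states_Suc:
  assumes "admissible A (set (fst (states A s0 n))) (snd (states A s0 n))"
    and "length (fst (states A s0 n)) = Suc n"
  shows "\<exists>m. fst (states A s0 (Suc n)) = fst (states A s0 n) @ [m] \<and>
    m \<notin> set (fst (states A s0 n)) \<and>
    d (fst (states A s0 n) ! fst (prod_decode n)) m < inverse (real (Suc (snd (prod_decode n)))) \<and>
    admissible A (set (fst (states A s0 (Suc n)))) (snd (states A s0 (Suc n)))"
proof -
  have "fst (prod_decode n) \<le> prod_encode (prod_decode n)" by (metis le_prod_encode_1 prod.collapse)
  then have "fst (prod_decode n) < length (fst (states A s0 n))" using assms(2) by simp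
  from next_state_extends[OF assms(1) this, of "inverse (real (Suc (snd (prod_decode n))))"]
  show ?thesis by simp
qed

definition chosen :: "nat set \<Rightarrow> nat list \<times> nat set \<Rightarrow> nat \<Rightarrow> nat" where
  "chosen A s0 n = last (fst (states A s0 n))"

context
  fixes A s0
  assumes s0: "admissible A (set (fst s0)) (snd s0)" "length (fst s0) = 1"
begin

lemma states_admissible:
  "admissible A (set (fst (states A s0 n))) (snd (states A s0 n)) \<and> length (fst (states A s0 n)) = Suc n"
proof (induction n)
  case (Suc n)
  then show ?case using states_Suc[of A s0 n] by auto
qed (use s0 in simp)

lemma states_extend:
  "\<exists>m. fst (states A s0 (Suc n)) = fst (states A s0 n) @ [m] \<and> m \<notin> set (fst (states A s0 n)) \<and>
    d (fst (states A s0 n) ! fst (prod_decode n)) m < inverse (real (Suc (snd (prod_decode n))))"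
  using states_Suc[OF conjunct1[OF states_admissible] conjunct2[OF states_admissible]] by blast

lemma states_eq_map: "fst (states A s0 n) = map (chosen A s0) [0..<Suc n]"
proof (induction n)
  case 0
  show ?case using s0(2) by (cases "fst s0") (simp_all add: chosen_def)
next
  case (Suc n)
  obtain m where m: "fst (states A s0 (Suc n)) = fst (states A s0 n) @ [m]"
    using states_extend[of n] by blast
  then have "chosen A s0 (Suc n) = m" unfolding chosen_def by simp
  then show ?case using m Suc by simp
qed

lemma set_states: "set (fst (states A s0 n)) = chosen A s0 ` {..n}"
  unfolding states_eq_map atMost_upto by (rule set_map)

lemma range_chosen_subset: "range (chosen A s0) \<subseteq> A"
proof
  fix q assume "q \<in> range (chosen A s0)"
  then obtain n where "q \<in> set (fst (states A s0 n))" using set_states by blast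
  then show "q \<in> A" using states_admissible[of n] unfolding admissible_def by blast
qed

lemma shift_increasing_range_chosen: "shift_increasing r (range (chosen A s0))"
  unfolding shift_increasing_def
proof (intro ballI impI)
  fix k l m assume "k \<in> range (chosen A s0)" "l \<in> range (chosen A s0)" "m \<in> range (chosen A s0)"
    and "k < l \<and> l < m"
  then obtain i1 i2 i3 where "k = chosen A s0 i1" "l = chosen A s0 i2" "m = chosen A s0 i3" by blast
  then have "{k, l, m} \<subseteq> set (fst (states A s0 (max i1 (max i2 i3))))"
    unfolding set_states by auto
  moreover have "shift_increasing r (set (fst (states A s0 (max i1 (max i2 i3)))))"
    using states_admissible unfolding admissible_def by blast
  ultimately show "r k l \<le> r l m" using \<open>k < l \<and> l < m\<close> unfolding shift_increasing_def by blast
qed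

lemma crowded_range_chosen: "crowded (range (chosen A s0))"
proof -
  have "\<exists>q\<in>range (chosen A s0). q \<noteq> chosen A s0 a \<and> d (chosen A s0 a) q < e" if "e > 0" for a e
  proof -
    obtain j where j: "inverse (real (Suc j)) < e"
      using ex_inverse_of_nat_less[OF \<open>e > 0\<close>] gr0_implies_Suc by blast
    define N where "N = prod_encode (a, j)"
    have "a \<le> N" unfolding N_def by (rule le_prod_encode_1)
    obtain m where m: "fst (states A s0 (Suc N)) = fst (states A s0 N) @ [m]"
      "m \<notin> set (fst (states A s0 N))" "d (fst (states A s0 N) ! a) m < inverse (real (Suc j))"
      using states_extend[of N] unfolding N_def by auto
    have "m = chosen A s0 (Suc N)" using m(1) unfolding chosen_def by simp
    moreover have "fst (states A s0 N) ! a = chosen A s0 a"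
      using \<open>a \<le> N\<close> unfolding states_eq_map by (simp del: upt_Suc)
    moreover have "chosen A s0 a \<in> set (fst (states A s0 N))" using \<open>a \<le> N\<close> set_states by blast
    ultimately have "chosen A s0 (Suc N) \<noteq> chosen A s0 a" "d (chosen A s0 a) (chosen A s0 (Suc N)) < e"
      using m j by auto
    then show ?thesis by blast
  qed
  then show ?thesis unfolding crowded_def by blast
qed

end

lemma exists_shift_increasing_crowded_subset:
  assumes "crowded D0" "D0 \<noteq> {}"
  shows "\<exists>B\<subseteq>D0. B \<noteq> {} \<and> shift_increasing r B \<and> crowded B"
proof -
  define b0 where "b0 = (LEAST n. n \<in> D0)"
  have "b0 \<in> D0" and b0_min: "\<And>m. m \<in> D0 \<Longrightarrow> b0 \<le> m"
    unfolding b0_def using assms(2) by (auto intro: LeastI Least_le)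
  then have "admissible D0 (set (fst ([b0], D0))) (snd ([b0], D0))"
    using assms(1) unfolding admissible_def shift_increasing_def
    by (auto dest: b0_min simp: le_neq_implies_less)
  moreover have "length (fst ([b0], D0)) = 1" by simp
  ultimately have "range (chosen D0 ([b0], D0)) \<subseteq> D0"
    "shift_increasing r (range (chosen D0 ([b0], D0)))" "crowded (range (chosen D0 ([b0], D0)))"
    by (rule range_chosen_subset shift_increasing_range_chosen crowded_range_chosen)+
  then show ?thesis by blast
qed

end

section \<open>Subspaces homeomorphic to the rationals\<close>

lemma not_openin_rat_singleton: "\<not> openin rat_topology {q}"
proof
  assume "openin rat_topology {q}"
  then obtain U where "open U" "{q} = U \<inter> \<rat>" by (auto simp: openin_subtopology)
  moreover then obtain e where "e > 0" "ball q e \<subseteq> U" by (metis Int_iff open_contains_ball singletonI)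
  moreover obtain s where "s \<in> \<rat>" "q < s" "s < q + e" using Rats_dense_in_real[of q "q + e"] \<open>e > 0\<close> by auto
  ultimately have "s \<in> U \<inter> \<rat>" by (auto simp: dist_real_def)
  then show False using \<open>{q} = U \<inter> \<rat>\<close> \<open>q < s\<close> by auto
qed

lemma not_openin_singleton_if_homeomorphic_rat:
  assumes "T homeomorphic_space rat_topology" shows "\<not> openin T {y}"
proof
  assume "openin T {y}"
  obtain f where "homeomorphic_map T rat_topology f" using assms homeomorphic_space by blast
  then have "openin rat_topology (f ` {y})" using homeomorphic_map_openness \<open>openin T {y}\<close>
    by (metis openin_subset)
  then show False using not_openin_rat_singleton by simp
qed

lemma topspace_nonempty_if_homeomorphic_rat:
  assumes "T homeomorphic_space rat_topology" shows "topspace T \<noteq> {}"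
proof -
  have "rat_topology \<noteq> trivial_topology"
    unfolding null_topspace_iff_trivial[symmetric] using Rats_0 by auto
  then show ?thesis using homeomorphic_empty_space[OF assms] by simp
qed

context Metric_space
begin

lemma crowded_if_homeomorphic_rat:
  assumes "S \<subseteq> M" "subtopology mtopology S homeomorphic_space rat_topology"
  shows "crowded S"
proof -
  have "\<exists>q\<in>S. q \<noteq> p \<and> d p q < e" if "p \<in> S" "e > 0" for p e
  proof (rule ccontr)
    assume "\<not> ?thesis"
    then have "mball p e \<inter> S = {p}" using that assms(1) by auto
    moreover have "openin (subtopology mtopology S) (mball p e \<inter> S)"
      by (rule openin_subtopology_Int) simp
    ultimately show False using not_openin_singleton_if_homeomorphic_rat[OF assms(2)] by simp
  qed
  then show ?thesis using assms(1) unfolding crowded_def by blast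
qed

end

theorem mainTheorem2:
  fixes r :: "nat \<Rightarrow> nat \<Rightarrow> nat"
    and X :: "'a topology"
    and x :: "nat \<Rightarrow> 'a"
    and d :: "'a \<Rightarrow> 'a \<Rightarrow> real"
  assumes r1: "\<And>k l m. k < l \<Longrightarrow> l < m \<Longrightarrow> r k m \<noteq> r l m"
    and r2: "\<And>k l m. k < l \<Longrightarrow> l < m \<Longrightarrow> r k l \<le> max (r k m) (r l m)"
    and r3: "\<And>k l m. k < l \<Longrightarrow> l < m \<Longrightarrow> r k m \<le> max (r k l) (r l m)"
    and x_in: "range x \<subseteq> topspace X"
    and x_inj: "inj x"
    and x_Q: "subtopology X (range x) homeomorphic_space rat_topology"
    and d_metric: "Metric_space (range x) d"
    and d_compat: "Metric_space.mtopology (range x) d = subtopology X (range x)"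
  shows "\<forall>A. \<not> scattered_idx X x A \<longrightarrow>
           (\<exists>B. B \<noteq> {} \<and> B \<subseteq> A \<and> shift_increasing r B \<and>
              (\<forall>i\<in>B. \<forall>j::nat. \<exists>n \<in> B \<inter> {n. d (x n) (x i) < 1 / (real j + 1)}. n \<noteq> i))"
proof (intro allI impI)
  fix A assume "\<not> scattered_idx X x A"
  then obtain B0 where "B0 \<subseteq> A" and B0: "subtopology X (x ` B0) homeomorphic_space rat_topology"
    unfolding scattered_idx_def by blast
  interpret M: Metric_space "range x" d by (rule d_metric)
  interpret N: colored_metric r "\<lambda>a b. d (x a) (x b)"
  proof intro_locales
    show "pair_coloring r" unfolding pair_coloring_def using r1 r2 r3 by blast
    show "Metric_space UNIV (\<lambda>a b. d (x a) (x b))" by (rule M.Metric_space_inj_pullback[OF x_inj]) simp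
  qed
  have "subtopology X (x ` B0) = subtopology M.mtopology (x ` B0)"
    using d_compat subtopology_subtopology[of X "range x" "x ` B0"] by (simp add: image_mono inf_absorb2)
  then have "M.crowded (x ` B0)" using M.crowded_if_homeomorphic_rat[of "x ` B0"] B0 by auto
  then have "N.crowded B0"
    unfolding M.crowded_def N.crowded_def by (simp add: inj_eq[OF x_inj])
  moreover have "B0 \<noteq> {}" using topspace_nonempty_if_homeomorphic_rat[OF B0] by auto
  ultimately have "\<exists>B\<subseteq>B0. B \<noteq> {} \<and> shift_increasing r B \<and> N.crowded B"
    by (rule N.exists_shift_increasing_crowded_subset)
  then obtain B where B: "B \<subseteq> B0" "B \<noteq> {}" "shift_increasing r B" "N.crowded B"
    by blast
  have "\<exists>n \<in> B \<inter> {n. d (x n) (x i) < 1 / (real j + 1)}. n \<noteq> i" if "i \<in> B" for i j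
  proof -
    have "1 / (real j + 1) > 0" by simp
    then obtain n where "n \<in> B" "n \<noteq> i" "d (x i) (x n) < 1 / (real j + 1)"
      using \<open>N.crowded B\<close> \<open>i \<in> B\<close> unfolding N.crowded_def by blast
    then show ?thesis by (auto simp: M.commute)
  qed
  then show "\<exists>B. B \<noteq> {} \<and> B \<subseteq> A \<and> shift_increasing r B \<and>
      (\<forall>i\<in>B. \<forall>j::nat. \<exists>n \<in> B \<inter> {n. d (x n) (x i) < 1 / (real j + 1)}. n \<noteq> i)"
    using B \<open>B0 \<subseteq> A\<close> by blast
qed

end
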